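(* Let $m\in\mathcal{S}(\Lambda)$. Suppose there exist $0\ne\eta\in\Lambda$, a root of unity $\zeta\ne1$, and an integer $N$ such that $(\nabla^\zeta_\eta)^Nm=0$. Then $\mathcal{A}(m)=0$.
   Context: $V$ finite-dimensional real vector space, $\Lambda\subset V$ full-rank lattice, $\Lambda_{\mathbb{Q}}=\Lambda\otimes\mathbb{Q}$. Rational polyhedron: finite intersection of half-spaces $\{v:\langle a,v\rangle\ge c\}$, $a\in\mathrm{Hom}(\Lambda,\mathbb{Z})\otimes\mathbb{Q}$, $c\in\mathbb{Q}$. $C_{P,\sigma}=\{(t,tv+\sigma):t>0,v\in P\}$ and $[C_{P,\sigma}]$ its indicator restricted to $\mathbb{Z}\oplus\Lambda$. Quasi-polynomials: algebra generated by polynomials and periodic functions. $\mathcal{S}(\Lambda)$: functions on $\mathbb{Z}\oplus\Lambda$ of the form $\sum_{P\in\mathcal{P}}\sum_{\sigma\in\Sigma_P}q_{P,\sigma}[C_{P,\sigma}]$, $\mathcal{P}$ rational polyhedra, $\Sigma_P\subset\Lambda_{\mathbb{Q}}$, $q_{P,\sigma}$ quasi-polynomial, $\{P+[0,1]\sigma\}$ locally finite in $V$. $(\nabla^\zeta_\eta m)(k,\lambda)=m(k,\lambda)-\zeta m(k,\lambda-\eta)$. $\Theta(m;k)=\sum_\lambda m(k,\lambda)\delta_{\lambda/k}$, $k\in\mathbb{Z}_{>0}$; $\mathcal{A}(m)$ is its asymptotic expansion as $k\to\infty$, and $\mathcal{A}(m)=0$ means all coefficients vanish, equivalently $\langle\Theta(m;k),\varphi\rangle=o(k^{-N'})$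 for every $\varphi\in C^\infty_c(V)$ and every $N'$. *)

theory Defs
  imports "HOL-Analysis.Analysis"
begin

definition full_lattice :: "'a::euclidean_space set \<Rightarrow> bool" where
  "full_lattice \<Lambda> \<longleftrightarrow> (\<exists>B. independent B \<and> span B = UNIV \<and>
      \<Lambda> = {(\<Sum>b\<in>B. of_int (c b) *\<^sub>R b) | c. True})"

text \<open>Lambda tensor Q, viewed inside V.\<close>
definition lattice_rat :: "'a::euclidean_space set \<Rightarrow> 'a set" where
  "lattice_rat \<Lambda> = {v. \<exists>n::nat. n > 0 \<and> of_nat n *\<^sub>R v \<in> \<Lambda>}"

text \<open>Elements of Hom(Lambda,Z) tensor Q, represented by vectors a acting through the inner product:
  exactly the linear functionals that are rational-valued on Lambda.\<close>
definition rat_covector :: "'a::euclidean_space set \<Rightarrow> 'a \<Rightarrow> bool" where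
  "rat_covector \<Lambda> a \<longleftrightarrow> (\<forall>l\<in>\<Lambda>. a \<bullet> l \<in> \<rat>)"

definition rat_polyhedron :: "'a::euclidean_space set \<Rightarrow> 'a set \<Rightarrow> bool" where
  "rat_polyhedron \<Lambda> P \<longleftrightarrow> (\<exists>F. finite F \<and>
      (\<forall>(a,c)\<in>F. rat_covector \<Lambda> a \<and> c \<in> \<rat>) \<and>
      P = {v. \<forall>(a,c)\<in>F. a \<bullet> v \<ge> c})"

definition in_cone :: "'a::euclidean_space set \<Rightarrow> 'a \<Rightarrow> int \<Rightarrow> 'a \<Rightarrow> bool" where
  "in_cone P \<sigma> k l \<longleftrightarrow> (\<exists>t v. t > 0 \<and> v \<in> P \<and> real_of_int k = t \<and> l = t *\<^sub>R v + \<sigma>)"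

text \<open>Periodic functions on Z + Lambda (invariant under a finite-index sublattice,
  which always contains p(Z + Lambda) for some integer p > 0).\<close>
definition periodic_on_lattice :: "'a::euclidean_space set \<Rightarrow> (int \<Rightarrow> 'a \<Rightarrow> complex) \<Rightarrow> bool" where
  "periodic_on_lattice \<Lambda> f \<longleftrightarrow> (\<exists>p::int. p > 0 \<and>
     (\<forall>k l j \<mu>. l \<in> \<Lambda> \<longrightarrow> \<mu> \<in> \<Lambda> \<longrightarrow>
        f (k + p * j) (l + of_int p *\<^sub>R \<mu>) = f k l))"

inductive quasi_poly :: "'a::euclidean_space set \<Rightarrow> (int \<Rightarrow> 'a \<Rightarrow> complex) \<Rightarrow> bool"
  for \<Lambda> where
  periodic: "periodic_on_lattice \<Lambda> f \<Longrightarrow> quasi_poly \<Lambda> f"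
| coord_k: "quasi_poly \<Lambda> (\<lambda>k l. of_int k)"
| coord_lin: "quasi_poly \<Lambda> (\<lambda>k l. complex_of_real (a \<bullet> l))"
| add: "quasi_poly \<Lambda> f \<Longrightarrow> quasi_poly \<Lambda> g \<Longrightarrow> quasi_poly \<Lambda> (\<lambda>k l. f k l + g k l)"
| mult: "quasi_poly \<Lambda> f \<Longrightarrow> quasi_poly \<Lambda> g \<Longrightarrow> quasi_poly \<Lambda> (\<lambda>k l. f k l * g k l)"

text \<open>The index set I is the set of pairs (P, sigma) with P in the family
  of rational polyhedra and sigma in Sigma_P; the family (P + [0,1] sigma) indexed by I must be locally
  finite, which makes the sum finite at every point of Z + Lambda.\<close>
definition class_S :: "'a::euclidean_space set \<Rightarrow> (int \<Rightarrow> 'a \<Rightarrow> complex) \<Rightarrow> bool" where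
  "class_S \<Lambda> m \<longleftrightarrow> (\<exists>(I :: ('a set \<times> 'a) set) (q :: 'a set \<times> 'a \<Rightarrow> int \<Rightarrow> 'a \<Rightarrow> complex).
      (\<forall>(P,\<sigma>)\<in>I. rat_polyhedron \<Lambda> P \<and> \<sigma> \<in> lattice_rat \<Lambda> \<and> quasi_poly \<Lambda> (q (P,\<sigma>))) \<and>
      (\<forall>x. \<exists>U. open U \<and> x \<in> U \<and>
          finite {(P,\<sigma>)\<in>I. U \<inter> {p + t *\<^sub>R \<sigma> | p t. p \<in> P \<and> t \<in> {0..1}} \<noteq> {}}) \<and>
      (\<forall>k. \<forall>l\<in>\<Lambda>. m k l = (\<Sum>(P,\<sigma>)\<in>{(P,\<sigma>)\<in>I. in_cone P \<sigma> k l}. q (P,\<sigma>) k l)))"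

definition nabla :: "complex \<Rightarrow> 'a::euclidean_space \<Rightarrow> (int \<Rightarrow> 'a \<Rightarrow> complex) \<Rightarrow> (int \<Rightarrow> 'a \<Rightarrow> complex)" where
  "nabla \<zeta> \<eta> m = (\<lambda>k l. m k l - \<zeta> * m k (l - \<eta>))"

coinductive smooth_fun :: "('a::real_normed_vector \<Rightarrow> 'b::real_normed_vector) \<Rightarrow> bool" where
  "(\<forall>x. f differentiable (at x)) \<Longrightarrow> (\<forall>u. smooth_fun (\<lambda>x. frechet_derivative f (at x) u))
     \<Longrightarrow> smooth_fun f"

definition test_function :: "('a::euclidean_space \<Rightarrow> complex) \<Rightarrow> bool" where
  "test_function \<phi> \<longleftrightarrow> smooth_fun \<phi> \<and> (\<exists>K. compact K \<and> (\<forall>x. x \<notin> K \<longrightarrow> \<phi> x = 0))"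

text \<open>Pairing of Theta(m;k) = sum_l m(k,l) delta_{l/k} with a test function.\<close>
definition Theta_pair :: "'a::euclidean_space set \<Rightarrow> (int \<Rightarrow> 'a \<Rightarrow> complex) \<Rightarrow> ('a \<Rightarrow> complex) \<Rightarrow> nat \<Rightarrow> complex" where
  "Theta_pair \<Lambda> m \<phi> k = (\<Sum>l\<in>{l\<in>\<Lambda>. \<phi> ((1 / real k) *\<^sub>R l) \<noteq> 0}. m (int k) l * \<phi> ((1 / real k) *\<^sub>R l))"

text \<open>A(m) = 0: all coefficients of the asymptotic expansion vanish, i.e. the pairing is
  o(k^{-N'}) for every test function and every N'.\<close>
definition asymp_zero :: "'a::euclidean_space set \<Rightarrow> (int \<Rightarrow> 'a \<Rightarrow> complex) \<Rightarrow> bool" where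
  "asymp_zero \<Lambda> m \<longleftrightarrow> (\<forall>\<phi>. test_function \<phi> \<longrightarrow> (\<forall>N'::nat.
      ((\<lambda>k. of_nat k ^ N' * Theta_pair \<Lambda> m \<phi> k) \<longlongrightarrow> 0) sequentially))"

end

theory Submission
  imports Defs "HOL-Computational_Algebra.Polynomial_Factorial" "HOL-Computational_Algebra.Field_as_Ring"
begin

text \<open>Write \<open>T\<close> for translation by \<open>\<eta>\<close> on functions on \<open>\<Lambda>\<close>. The hypothesis says that
  \<open>(1 - \<zeta> T\<^sup>-\<^sup>1)\<^sup>N\<close> annihilates \<open>m(k, -)\<close>. Since \<open>\<zeta> \<noteq> 1\<close>, the polynomials \<open>(1 - \<zeta> X)\<^sup>N\<close> and
  \<open>(1 - X)\<^sup>M\<close> are coprime for every \<open>M\<close>, so \<open>1 = A(X) (1 - \<zeta> X)\<^sup>N + B(X) (1 - X)\<^sup>M\<close>.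
  Pair \<open>m(k, -)\<close> with \<open>\<psi>\<^sub>k(l) = \<phi>(l/k)\<close> and split \<open>\<psi>\<^sub>k\<close> accordingly: since \<open>T\<^sup>-\<^sup>1\<close> is adjoint to \<open>T\<close>,
  the first part pairs to zero, and the second part \<open>B(T) (1 - T)\<^sup>M \<psi>\<^sub>k\<close> is an \<open>M\<close>-fold difference of \<open>\<phi>\<close>
  with step \<open>\<eta>/k\<close>, hence \<open>O(k\<^sup>-\<^sup>M)\<close>, and is supported in a ball of radius \<open>O(k)\<close>. On such balls the
  lattice has \<open>O(k\<^sup>d)\<close> points and \<open>m\<close> grows polynomially (local finiteness of the cones and
  polynomial growth of quasi-polynomials), so \<open>\<langle>\<Theta>(m;k), \<phi>\<rangle> = O(k\<^sup>D\<^sup>-\<^sup>M)\<close> with \<open>D\<close> independent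
  of \<open>M\<close>.\<close>

section \<open>Polynomials in a translation operator\<close>

text \<open>\<open>poly_shift h p g = p(T) g\<close>, where \<open>(T g) x = g (x + h)\<close>.\<close>

definition poly_shift :: "'a::real_vector \<Rightarrow> 'b::comm_ring_1 poly \<Rightarrow> ('a \<Rightarrow> 'b) \<Rightarrow> 'a \<Rightarrow> 'b" where
  "poly_shift h p g x = (\<Sum>i\<le>degree p. coeff p i * g (x + of_nat i *\<^sub>R h))"

lemma poly_shift_eq_sum:
  "degree p \<le> n \<Longrightarrow> poly_shift h p g x = (\<Sum>i\<le>n. coeff p i * g (x + of_nat i *\<^sub>R h))"
  unfolding poly_shift_def by (rule sum.mono_neutral_left) (auto simp: coeff_eq_0)

lemma poly_shift_0 [simp]: "poly_shift h 0 g x = 0"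
  by (simp add: poly_shift_def)

lemma poly_shift_add: "poly_shift h (p + q) g x = poly_shift h p g x + poly_shift h q g x"
proof -
  let ?n = "max (degree p) (degree q)"
  have "degree (p + q) \<le> ?n"
    by (rule degree_add_le) auto
  then show ?thesis
    by (simp add: poly_shift_eq_sum[of _ ?n] poly_shift_eq_sum[of p ?n] poly_shift_eq_sum[of q ?n]
        sum.distrib algebra_simps)
qed

lemma poly_shift_1 [simp]: "poly_shift h 1 g x = g x"
  by (simp add: poly_shift_def)

lemma poly_shift_smult: "poly_shift h (smult a p) g x = a * poly_shift h p g x"
proof -
  have "poly_shift h (smult a p) g x = (\<Sum>i\<le>degree p. coeff (smult a p) i * g (x + of_nat i *\<^sub>R h))"
    by (rule poly_shift_eq_sum) (rule degree_smult_le)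
  then show ?thesis
    by (simp add: poly_shift_def sum_distrib_left mult.assoc)
qed

lemma poly_shift_pCons: "poly_shift h (pCons a p) g x = a * g x + poly_shift h p g (x + h)"
proof -
  have "poly_shift h (pCons a p) g x
      = (\<Sum>i\<le>Suc (degree p). coeff (pCons a p) i * g (x + of_nat i *\<^sub>R h))"
    by (rule poly_shift_eq_sum) (simp add: degree_pCons_le)
  also have "\<dots> = a * g x + (\<Sum>i\<le>degree p. coeff p i * g (x + h + of_nat i *\<^sub>R h))"
    by (subst sum.atMost_Suc_shift) (simp add: algebra_simps)
  finally show ?thesis
    by (simp add: poly_shift_def)
qed

lemma poly_shift_linear: "poly_shift h [:a, b:] g x = a * g x + b * g (x + h)"
  by (simp add: poly_shift_pCons)

lemma poly_shift_mult: "poly_shift h (p * q) g x = poly_shift h p (poly_shift h q g) x"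
  by (induction p arbitrary: x) (simp_all add: poly_shift_add poly_shift_smult poly_shift_pCons)

lemma poly_shift_rescale:
  "poly_shift h p (\<lambda>y. g (c *\<^sub>R y)) x = poly_shift (c *\<^sub>R h) p g (c *\<^sub>R x)"
  by (simp add: poly_shift_def scaleR_add_right mult.commute)

lemma poly_shift_eq_0_outside_ball:
  assumes g: "\<And>y. norm y > r \<Longrightarrow> g y = 0" and x: "norm x > r + real (degree p) * norm h"
  shows "poly_shift h p g x = 0"
  unfolding poly_shift_def
proof (rule sum.neutral, intro ballI)
  fix i assume "i \<in> {..degree p}"
  then have "real i * norm h \<le> real (degree p) * norm h"
    by (intro mult_right_mono) auto
  moreover have "norm x - real i * norm h \<le> norm (x + of_nat i *\<^sub>R h)"
    using norm_triangle_ineq2[of x "- (of_nat i *\<^sub>R h)"] by simp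
  ultimately show "coeff p i * g (x + of_nat i *\<^sub>R h) = 0"
    using g x by simp
qed

lemma norm_poly_shift_le:
  fixes g :: "'a::real_vector \<Rightarrow> 'b::real_normed_field"
  assumes "\<And>y. norm (g y) \<le> C"
  shows "norm (poly_shift h p g x) \<le> (\<Sum>i\<le>degree p. norm (coeff p i)) * C"
  unfolding poly_shift_def sum_distrib_right
  by (rule order.trans[OF norm_sum sum_mono]) (simp add: norm_mult assms mult_left_mono)

lemma poly_shift_rescaled_eq_0_outside_ball:
  assumes \<phi>: "\<And>x. norm x > r \<Longrightarrow> \<phi> x = 0" and "k \<ge> 1" and "degree p \<le> k * n"
    and l: "norm l > real k * (r + real n * norm h)"
  shows "poly_shift h p (\<lambda>y. \<phi> ((1 / real k) *\<^sub>R y)) l = 0"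
proof (rule poly_shift_eq_0_outside_ball)
  show "\<phi> ((1 / real k) *\<^sub>R y) = 0" if "norm y > real k * r" for y
    using \<phi> that \<open>k \<ge> 1\<close> by (simp add: field_simps)
  have "real (degree p) * norm h \<le> real (k * n) * norm h"
    using \<open>degree p \<le> k * n\<close> by (intro mult_right_mono of_nat_mono) simp_all
  then show "real k * r + real (degree p) * norm h < norm l"
    using l by (simp add: algebra_simps)
qed

lemma norm_poly_shift_mult_rescale_le:
  fixes \<phi> :: "'a::real_vector \<Rightarrow> 'b::real_normed_field"
  assumes "\<And>x. norm (poly_shift (s *\<^sub>R h) q \<phi> x) \<le> c"
  shows "norm (poly_shift h (p * q) (\<lambda>y. \<phi> (s *\<^sub>R y)) l) \<le> (\<Sum>i\<le>degree p. norm (coeff p i)) * c"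
  unfolding poly_shift_mult poly_shift_rescale using assms by (rule norm_poly_shift_le)

lemma nabla_power_eq_poly_shift:
  "(nabla \<zeta> \<eta> ^^ N) m k l = poly_shift (-\<eta>) ([:1, -\<zeta>:] ^ N) (m k) l"
proof (induction N arbitrary: l)
  case (Suc N)
  have "(nabla \<zeta> \<eta> ^^ Suc N) m k l = (nabla \<zeta> \<eta> ^^ N) m k l - \<zeta> * (nabla \<zeta> \<eta> ^^ N) m k (l - \<eta>)"
    by (simp add: nabla_def)
  also have "\<dots> = poly_shift (-\<eta>) ([:1, -\<zeta>:] * [:1, -\<zeta>:] ^ N) (m k) l"
    by (simp only: poly_shift_mult poly_shift_linear Suc) simp
  finally show ?case
    by simp
qed simp

lemma poly_bezout_shift_factors:
  fixes \<zeta> :: complex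
  assumes "\<zeta> \<noteq> 1" "\<zeta> \<noteq> 0"
  obtains A B where "A * [:1, -\<zeta>:] ^ N + B * [:1, -1:] ^ M = 1" "degree B \<le> N"
proof -
  let ?u = "[:1, -\<zeta>:] ^ N" and ?v = "[:1, -1:] ^ M"
  have "smult (1 / (1 - \<zeta>)) [:1, -\<zeta>:] + smult (- \<zeta> / (1 - \<zeta>)) [:1, -1:] = 1"
    using assms by (simp add: one_pCons field_simps)
  then have "coprime [:1, -\<zeta>:] [:1, -1:]"
    by (intro coprimeI) (metis dvd_add dvd_smult)
  then have "gcd ?u ?v = 1"
    by simp
  then obtain A B where AB: "A * ?u + B * ?v = 1"
    by (metis bezout_coefficients_fst_snd)
  have "(A + B div ?u * ?v) * ?u + B mod ?u * ?v = A * ?u + (B div ?u * ?u + B mod ?u) * ?v"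
    by algebra
  also have "\<dots> = 1"
    by (simp only: div_mult_mod_eq AB)
  finally have "(A + B div ?u * ?v) * ?u + B mod ?u * ?v = 1" .
  moreover have "degree (B mod ?u) \<le> N"
    using degree_mod_less[of ?u B] assms(2) by (auto simp: degree_power_eq)
  ultimately show ?thesis
    by (rule that)
qed

section \<open>Lattices\<close>

lemma full_lattice_obtain_basis:
  assumes "full_lattice \<Lambda>"
  obtains B where "finite B" "independent B" "span B = UNIV"
    "\<Lambda> = {(\<Sum>b\<in>B. of_int (c b) *\<^sub>R b) | c. True}"
  using assms independent_bound unfolding full_lattice_def by blast

lemma full_lattice_diff:
  assumes "full_lattice \<Lambda>" "l \<in> \<Lambda>" "\<mu> \<in> \<Lambda>"
  shows "l - \<mu> \<in> \<Lambda>"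
proof -
  obtain B where B: "\<Lambda> = {(\<Sum>b\<in>B. of_int (c b) *\<^sub>R b) | c. True}"
    using assms(1) full_lattice_obtain_basis by blast
  obtain c c' where "l = (\<Sum>b\<in>B. of_int (c b) *\<^sub>R b)" "\<mu> = (\<Sum>b\<in>B. of_int (c' b) *\<^sub>R b)"
    using assms B by auto
  then have "l - \<mu> = (\<Sum>b\<in>B. of_int (c b - c' b) *\<^sub>R b)"
    by (simp add: sum_subtractf scaleR_diff_left)
  then show ?thesis
    unfolding B by (intro CollectI exI[of _ "\<lambda>b. c b - c' b"]) simp
qed

lemma full_lattice_zero: "full_lattice \<Lambda> \<Longrightarrow> 0 \<in> \<Lambda>"
  by (auto simp: full_lattice_def intro!: exI[of _ "\<lambda>_. 0"])

lemma full_lattice_add: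
  assumes "full_lattice \<Lambda>" "l \<in> \<Lambda>" "\<mu> \<in> \<Lambda>"
  shows "l + \<mu> \<in> \<Lambda>"
  using full_lattice_diff[OF assms(1,2) full_lattice_diff[OF assms(1) full_lattice_zero[OF assms(1)] assms(3)]]
  by simp

lemma full_lattice_add_of_nat_scaleR:
  assumes "full_lattice \<Lambda>" "l \<in> \<Lambda>" "\<eta> \<in> \<Lambda>"
  shows "l + of_nat n *\<^sub>R \<eta> \<in> \<Lambda>"
proof (induction n)
  case (Suc n)
  then show ?case
    using full_lattice_add[OF assms(1) Suc assms(3)] by (simp add: algebra_simps)
qed (simp add: assms(2))

lemma representation_bounded:
  fixes B :: "'a::euclidean_space set"
  assumes "finite B" "independent B" "span B = UNIV"
  obtains C where "C \<ge> 0" "\<And>v b. \<bar>representation B v b\<bar> \<le> C * norm v"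
proof -
  have "\<forall>b. \<exists>C. \<forall>v. \<bar>representation B v b\<bar> \<le> C * norm v"
  proof
    fix b
    have "linear (\<lambda>v. representation B v b)"
      by (rule linearI) (simp_all add: representation_add representation_scale assms)
    from linear_bounded[OF this] show "\<exists>C. \<forall>v. \<bar>representation B v b\<bar> \<le> C * norm v"
      by simp
  qed
  from choice[OF this] obtain C where C: "\<And>b v. \<bar>representation B v b\<bar> \<le> C b * norm v"
    by blast
  define C' where "C' = (\<Sum>b\<in>B. \<bar>C b\<bar>)"
  have "C' \<ge> 0"
    unfolding C'_def by (intro sum_nonneg abs_ge_zero)
  moreover have "\<bar>representation B v b\<bar> \<le> C' * norm v" for v b
  proof (cases "b \<in> B")
    case True
    have "\<bar>representation B v b\<bar> \<le> C b * norm v"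
      by (rule C)
    also have "\<dots> \<le> C' * norm v"
    proof (rule mult_right_mono)
      have "C b \<le> \<bar>C b\<bar>"
        by simp
      also have "\<dots> \<le> C'"
        unfolding C'_def using True assms(1) by (intro member_le_sum) auto
      finally show "C b \<le> C'" .
    qed simp
    finally show ?thesis .
  next
    case False
    then have "representation B v b = 0"
      using representation_ne_zero by metis
    then show ?thesis
      using \<open>C' \<ge> 0\<close> by simp
  qed
  ultimately show ?thesis
    by (rule that)
qed

lemma representation_sum_of_int:
  fixes B :: "'a::euclidean_space set"
  assumes "finite B" "independent B" "span B = UNIV" "b \<in> B"
  shows "representation B (\<Sum>b'\<in>B. of_int (c b') *\<^sub>R b') b = of_int (c b)"
proof -
  have "representation B (\<Sum>b'\<in>B. of_int (c b') *\<^sub>R b') b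
      = (\<Sum>b'\<in>B. of_int (c b') * representation B b' b)"
    using assms by (simp add: representation_sum representation_scale)
  also have "\<dots> = (\<Sum>b'\<in>B. if b' = b then of_int (c b') else 0)"
    using assms by (intro sum.cong) (auto simp: representation_basis)
  finally show ?thesis
    using assms by simp
qed

lemma full_lattice_card_cball_le:
  fixes \<Lambda> :: "'a::euclidean_space set"
  assumes "full_lattice \<Lambda>"
  obtains C d where "\<And>r. r \<ge> 1 \<Longrightarrow> finite (\<Lambda> \<inter> cball 0 r)"
    "\<And>r. r \<ge> 1 \<Longrightarrow> real (card (\<Lambda> \<inter> cball 0 r)) \<le> C * r ^ d"
proof -
  obtain B where B: "finite B" "independent B" "span B = UNIV"
    "\<Lambda> = {(\<Sum>b\<in>B. of_int (c b) *\<^sub>R b) | c. True}"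
    using assms full_lattice_obtain_basis by blast
  obtain C0 where C0: "C0 \<ge> 0" "\<And>v b. \<bar>representation B v b\<bar> \<le> C0 * norm v"
    using representation_bounded[OF B(1-3)] by blast
  define F :: "('a \<Rightarrow> int) \<Rightarrow> 'a" where "F c = (\<Sum>b\<in>B. of_int (c b) *\<^sub>R b)" for c
  have "finite (\<Lambda> \<inter> cball 0 r) \<and> real (card (\<Lambda> \<inter> cball 0 r)) \<le> ((2 * C0 + 3) * r) ^ card B"
    if r: "r \<ge> 1" for r
  proof -
    define T where "T = \<lceil>C0 * r\<rceil>"
    define S where "S = PiE B (\<lambda>_. {-T..T})"
    have sub: "\<Lambda> \<inter> cball 0 r \<subseteq> F ` S"
    proof
      fix l assume l: "l \<in> \<Lambda> \<inter> cball 0 r"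
      then obtain c where c: "l = F c"
        using B(4) unfolding F_def by auto
      have "c b \<in> {-T..T}" if "b \<in> B" for b
      proof -
        have "\<bar>real_of_int (c b)\<bar> \<le> C0 * norm l"
          using C0(2)[of l b] representation_sum_of_int[OF B(1-3) that] c by (simp add: F_def)
        also have "\<dots> \<le> C0 * r"
          using l C0(1) by (intro mult_left_mono) auto
        also have "\<dots> \<le> of_int T"
          unfolding T_def by (rule le_of_int_ceiling)
        finally show ?thesis
          by (simp add: abs_le_iff flip: of_int_abs)
      qed
      then have "restrict c B \<in> S"
        unfolding S_def by auto
      moreover have "F (restrict c B) = l"
        unfolding F_def c by (intro sum.cong) auto
      ultimately show "l \<in> F ` S"
        by blast
    qed
    have "finite S"
      unfolding S_def using B(1) by (intro finite_PiE) auto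
    then have fin: "finite (\<Lambda> \<inter> cball 0 r)"
      using sub by (meson finite_imageI finite_subset)
    have "card (\<Lambda> \<inter> cball 0 r) \<le> card S"
      using card_mono[OF finite_imageI[OF \<open>finite S\<close>] sub] card_image_le[OF \<open>finite S\<close>, of F]
      by linarith
    also have "card S = nat (2 * T + 1) ^ card B"
      unfolding S_def using B(1) by (simp add: card_PiE)
    finally have "real (card (\<Lambda> \<inter> cball 0 r)) \<le> real (nat (2 * T + 1)) ^ card B"
      by (simp flip: of_nat_power)
    also have "\<dots> \<le> ((2 * C0 + 3) * r) ^ card B"
    proof (rule power_mono)
      have "T \<ge> 0"
        using C0(1) r unfolding T_def by (simp add: order.strict_trans2[of "-1" 0])
      then have "real (nat (2 * T + 1)) = 2 * of_int T + 1"
        by simp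
      also have "\<dots> \<le> 2 * (C0 * r + 1) + 1"
        using of_int_ceiling_le_add_one[of "C0 * r"] unfolding T_def by argo
      also have "\<dots> \<le> (2 * C0 + 3) * r"
        using r by (simp add: algebra_simps)
      finally show "real (nat (2 * T + 1)) \<le> (2 * C0 + 3) * r" .
    qed simp
    finally show ?thesis
      using fin by simp
  qed
  then show ?thesis
    by (intro that[of "(2 * C0 + 3) ^ card B" "card B"]) (simp_all add: power_mult_distrib)
qed

lemma periodic_on_lattice_bounded:
  fixes \<Lambda> :: "'a::euclidean_space set"
  assumes "full_lattice \<Lambda>" "periodic_on_lattice \<Lambda> f"
  obtains C where "\<And>k l. l \<in> \<Lambda> \<Longrightarrow> norm (f k l) \<le> C"
proof -
  obtain B where B: "finite B" "\<Lambda> = {(\<Sum>b\<in>B. of_int (c b) *\<^sub>R b) | c. True}"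
    using assms(1) full_lattice_obtain_basis by blast
  obtain p :: int where p: "p > 0"
    "\<And>k l j \<mu>. l \<in> \<Lambda> \<Longrightarrow> \<mu> \<in> \<Lambda> \<Longrightarrow> f (k + p * j) (l + of_int p *\<^sub>R \<mu>) = f k l"
    using assms(2) unfolding periodic_on_lattice_def by blast
  define F :: "('a \<Rightarrow> int) \<Rightarrow> 'a" where "F c = (\<Sum>b\<in>B. of_int (c b) *\<^sub>R b)" for c
  define V where "V = (\<lambda>(j, c). f j (F c)) ` ({0..<p} \<times> PiE B (\<lambda>_. {0..<p}))"
  have "f k l \<in> V" if l: "l \<in> \<Lambda>" for k l
  proof -
    obtain c where c: "l = F c"
      using B(2) l unfolding F_def by auto
    define c0 where "c0 = restrict (\<lambda>b. c b mod p) B"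
    have "F c = F c0 + of_int p *\<^sub>R F (\<lambda>b. c b div p)"
      unfolding F_def c0_def scaleR_sum_right sum.distrib[symmetric]
      by (intro sum.cong) (simp_all flip: scaleR_add_left of_int_mult of_int_add)
    then have "f k l = f (k mod p + p * (k div p)) (F c0 + of_int p *\<^sub>R F (\<lambda>b. c b div p))"
      using c by simp
    also have "\<dots> = f (k mod p) (F c0)"
      using B(2) by (intro p(2)) (auto simp: F_def)
    finally show ?thesis
      unfolding V_def c0_def using p(1) by (auto intro!: image_eqI[of _ _ "(k mod p, c0)"] simp: c0_def)
  qed
  moreover have "finite V"
    unfolding V_def using B(1) by (intro finite_imageI finite_cartesian_product finite_PiE) auto
  ultimately show ?thesis
    using that[of "\<Sum>v\<in>V. norm v"] by (simp add: member_le_sum)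
qed

lemma finite_full_lattice_inter_cball:
  fixes \<Lambda> :: "'a::euclidean_space set"
  assumes "full_lattice \<Lambda>"
  shows "finite (\<Lambda> \<inter> cball 0 r)"
proof -
  obtain C d where "\<And>r. r \<ge> 1 \<Longrightarrow> finite (\<Lambda> \<inter> cball 0 r)"
    using full_lattice_card_cball_le[OF assms] by blast
  then have "finite (\<Lambda> \<inter> cball 0 (max r 1))"
    by simp
  then show ?thesis
    by (rule finite_subset[rotated]) auto
qed

section \<open>Polynomial growth of functions in the class S\<close>

lemma quasi_poly_polynomial_growth:
  fixes \<Lambda> :: "'a::euclidean_space set"
  assumes "full_lattice \<Lambda>" "quasi_poly \<Lambda> f"
  shows "\<exists>C D. C \<ge> 0 \<and> (\<forall>k. \<forall>l\<in>\<Lambda>. norm (f k l) \<le> C * (1 + \<bar>real_of_int k\<bar> + norm l) ^ D)"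
  using assms(2)
proof (induction rule: quasi_poly.induct)
  case (periodic f)
  obtain C where "\<And>k l. l \<in> \<Lambda> \<Longrightarrow> norm (f k l) \<le> C"
    using periodic_on_lattice_bounded[OF assms(1) periodic] by blast
  then show ?case
    by (intro exI[of _ "max C 0"] exI[of _ 0]) (auto intro: order.trans[OF _ max.cobounded1])
next
  case coord_k
  show ?case
    by (intro exI[of _ 1] exI[of _ 1]) auto
next
  case (coord_lin a)
  have "norm (complex_of_real (a \<bullet> l)) \<le> norm a * (1 + \<bar>real_of_int k\<bar> + norm l) ^ 1" for k l
  proof -
    have "norm (complex_of_real (a \<bullet> l)) \<le> norm a * norm l"
      using Cauchy_Schwarz_ineq2[of a l] by simp
    also have "\<dots> \<le> norm a * (1 + \<bar>real_of_int k\<bar> + norm l) ^ 1"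
      by (intro mult_left_mono) auto
    finally show ?thesis .
  qed
  then show ?case
    by (intro exI[of _ "norm a"] exI[of _ 1]) auto
next
  case (add f g)
  then obtain C1 D1 C2 D2 where
    f: "C1 \<ge> 0" "\<forall>k. \<forall>l\<in>\<Lambda>. norm (f k l) \<le> C1 * (1 + \<bar>real_of_int k\<bar> + norm l) ^ D1" and
    g: "C2 \<ge> 0" "\<forall>k. \<forall>l\<in>\<Lambda>. norm (g k l) \<le> C2 * (1 + \<bar>real_of_int k\<bar> + norm l) ^ D2"
    by blast
  have "norm (f k l + g k l) \<le> (C1 + C2) * (1 + \<bar>real_of_int k\<bar> + norm l) ^ (D1 + D2)"
    if l: "l \<in> \<Lambda>" for k l
  proof -
    define X where "X = 1 + \<bar>real_of_int k\<bar> + norm l"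
    have "X \<ge> 1"
      unfolding X_def by simp
    have "norm (f k l + g k l) \<le> C1 * X ^ D1 + C2 * X ^ D2"
      using f(2) g(2) l unfolding X_def by (meson add_mono norm_triangle_le)
    also have "\<dots> \<le> C1 * X ^ (D1 + D2) + C2 * X ^ (D1 + D2)"
      using \<open>X \<ge> 1\<close> f(1) g(1) by (intro add_mono mult_left_mono power_increasing) auto
    finally show ?thesis
      unfolding X_def by (simp add: algebra_simps)
  qed
  then show ?case
    using f(1) g(1) by (intro exI[of _ "C1 + C2"] exI[of _ "D1 + D2"]) auto
next
  case (mult f g)
  then obtain C1 D1 C2 D2 where
    f: "C1 \<ge> 0" "\<forall>k. \<forall>l\<in>\<Lambda>. norm (f k l) \<le> C1 * (1 + \<bar>real_of_int k\<bar> + norm l) ^ D1" and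
    g: "C2 \<ge> 0" "\<forall>k. \<forall>l\<in>\<Lambda>. norm (g k l) \<le> C2 * (1 + \<bar>real_of_int k\<bar> + norm l) ^ D2"
    by blast
  have "norm (f k l * g k l) \<le> (C1 * C2) * (1 + \<bar>real_of_int k\<bar> + norm l) ^ (D1 + D2)"
    if l: "l \<in> \<Lambda>" for k l
  proof -
    have "norm (f k l * g k l)
        \<le> (C1 * (1 + \<bar>real_of_int k\<bar> + norm l) ^ D1) * (C2 * (1 + \<bar>real_of_int k\<bar> + norm l) ^ D2)"
      unfolding norm_mult using f g l by (intro mult_mono) auto
    then show ?thesis
      by (simp add: algebra_simps power_add)
  qed
  then show ?case
    using f(1) g(1) by (intro exI[of _ "C1 * C2"] exI[of _ "D1 + D2"]) auto
qed

lemma quasi_poly_family_polynomial_growth: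
  fixes \<Lambda> :: "'a::euclidean_space set"
  assumes "full_lattice \<Lambda>" "finite J" "\<And>i. i \<in> J \<Longrightarrow> quasi_poly \<Lambda> (q i)"
  obtains C D where "C \<ge> 0"
    "\<And>i k l. i \<in> J \<Longrightarrow> l \<in> \<Lambda> \<Longrightarrow> norm (q i k l) \<le> C * (1 + \<bar>real_of_int k\<bar> + norm l) ^ D"
proof -
  have "\<exists>C D. C \<ge> 0 \<and> (\<forall>i\<in>J. \<forall>k. \<forall>l\<in>\<Lambda>. norm (q i k l) \<le> C * (1 + \<bar>real_of_int k\<bar> + norm l) ^ D)"
    using assms(2,3)
  proof (induction J rule: finite_induct)
    case (insert j J)
    then obtain C D where J: "C \<ge> 0"
      "\<forall>i\<in>J. \<forall>k. \<forall>l\<in>\<Lambda>. norm (q i k l) \<le> C * (1 + \<bar>real_of_int k\<bar> + norm l) ^ D"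
      by blast
    obtain C' D' where j: "C' \<ge> 0"
      "\<forall>k. \<forall>l\<in>\<Lambda>. norm (q j k l) \<le> C' * (1 + \<bar>real_of_int k\<bar> + norm l) ^ D'"
      using quasi_poly_polynomial_growth[OF assms(1) insert.prems] by blast
    have "norm (q i k l) \<le> max C C' * (1 + \<bar>real_of_int k\<bar> + norm l) ^ (D + D')"
      if "i \<in> insert j J" "l \<in> \<Lambda>" for i k l
    proof -
      define X where "X = 1 + \<bar>real_of_int k\<bar> + norm l"
      have "X \<ge> 1"
        unfolding X_def by simp
      then have "C * X ^ D \<le> max C C' * X ^ (D + D')" "C' * X ^ D' \<le> max C C' * X ^ (D + D')"
        using J(1) by (intro mult_mono power_increasing; simp)+
      moreover have "norm (q i k l) \<le> C * X ^ D \<or> norm (q i k l) \<le> C' * X ^ D'"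
        using that J j unfolding X_def by auto
      ultimately show ?thesis
        unfolding X_def by linarith
    qed
    then show ?case
      using J(1) by (intro exI[of _ "max C C'"] exI[of _ "D + D'"]) auto
  qed auto
  then show ?thesis
    using that by blast
qed

lemma locally_finite_family_meets_compact:
  assumes "\<And>x. \<exists>U. open U \<and> x \<in> U \<and> finite {i\<in>I. U \<inter> S i \<noteq> {}}" "compact K"
  shows "finite {i\<in>I. K \<inter> S i \<noteq> {}}"
proof -
  define \<U> where "\<U> = {U. open U \<and> finite {i\<in>I. U \<inter> S i \<noteq> {}}}"
  have "K \<subseteq> \<Union>\<U>"
    using assms(1) unfolding \<U>_def by blast
  then obtain \<U>' where \<U>': "\<U>' \<subseteq> \<U>" "finite \<U>'" "K \<subseteq> \<Union>\<U>'"
    using compactE[OF assms(2)] unfolding \<U>_def by blast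
  then have "{i\<in>I. K \<inter> S i \<noteq> {}} \<subseteq> (\<Union>U\<in>\<U>'. {i\<in>I. U \<inter> S i \<noteq> {}})"
    by blast
  moreover have "finite (\<Union>U\<in>\<U>'. {i\<in>I. U \<inter> S i \<noteq> {}})"
    using \<U>' unfolding \<U>_def by auto
  ultimately show ?thesis
    by (rule finite_subset)
qed

lemma class_S_polynomial_growth:
  fixes \<Lambda> :: "'a::euclidean_space set"
  assumes "full_lattice \<Lambda>" "class_S \<Lambda> m" "R \<ge> 0"
  obtains C D where "C \<ge> 0"
    "\<And>k l. k \<ge> 1 \<Longrightarrow> l \<in> \<Lambda> \<Longrightarrow> norm l \<le> real k * R \<Longrightarrow> norm (m (int k) l) \<le> C * real k ^ D"
proof -
  obtain I q where I: "\<forall>(P,\<sigma>)\<in>I. rat_polyhedron \<Lambda> P \<and> \<sigma> \<in> lattice_rat \<Lambda> \<and> quasi_poly \<Lambda> (q (P,\<sigma>))"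
    and lf: "\<forall>x. \<exists>U. open U \<and> x \<in> U \<and>
          finite {(P,\<sigma>)\<in>I. U \<inter> {p + t *\<^sub>R \<sigma> | p t. p \<in> P \<and> t \<in> {0..1}} \<noteq> {}}"
    and m: "\<forall>k. \<forall>l\<in>\<Lambda>. m k l = (\<Sum>(P,\<sigma>)\<in>{(P,\<sigma>)\<in>I. in_cone P \<sigma> k l}. q (P,\<sigma>) k l)"
    using assms(2) unfolding class_S_def by blast
  define S :: "'a set \<times> 'a \<Rightarrow> 'a set" where
    "S = (\<lambda>(P,\<sigma>). {p + t *\<^sub>R \<sigma> | p t. p \<in> P \<and> t \<in> {0..1}})"
  define J where "J = {i\<in>I. cball 0 R \<inter> S i \<noteq> {}}"
  have "finite J"
    unfolding J_def
    by (rule locally_finite_family_meets_compact) (use lf in \<open>auto simp: S_def case_prod_unfold\<close>)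
  have active: "{(P,\<sigma>)\<in>I. in_cone P \<sigma> (int k) l} \<subseteq> J"
    if k: "k \<ge> 1" and l: "norm l \<le> real k * R" for k :: nat and l
  proof safe
    fix P \<sigma> assume "(P,\<sigma>) \<in> I" "in_cone P \<sigma> (int k) l"
    then obtain v where v: "v \<in> P" "l = real k *\<^sub>R v + \<sigma>"
      unfolding in_cone_def by auto
    have "(1 / real k) *\<^sub>R l = v + (1 / real k) *\<^sub>R \<sigma>"
      using k by (simp add: v(2) scaleR_add_right)
    moreover have "1 / real k \<in> {0..1}" "norm ((1 / real k) *\<^sub>R l) \<le> R"
      using k l by (auto simp: field_simps)
    ultimately show "(P,\<sigma>) \<in> J"
      unfolding J_def S_def using \<open>(P,\<sigma>) \<in> I\<close> v(1) by force
  qed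
  have "quasi_poly \<Lambda> (q i)" if "i \<in> J" for i
    using I that unfolding J_def by auto
  then obtain C D where C: "C \<ge> 0"
    "\<And>i k l. i \<in> J \<Longrightarrow> l \<in> \<Lambda> \<Longrightarrow> norm (q i k l) \<le> C * (1 + \<bar>real_of_int k\<bar> + norm l) ^ D"
    using quasi_poly_family_polynomial_growth[OF assms(1) \<open>finite J\<close>] by blast
  have "norm (m (int k) l) \<le> (real (card J) * C * (2 + R) ^ D) * real k ^ D"
    if k: "k \<ge> 1" and l: "l \<in> \<Lambda>" "norm l \<le> real k * R" for k l
  proof -
    have "norm (m (int k) l) \<le> (\<Sum>i\<in>{(P,\<sigma>)\<in>I. in_cone P \<sigma> (int k) l}. norm (q i (int k) l))"
      using m l(1) by (simp add: case_prod_unfold norm_sum)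
    also have "\<dots> \<le> (\<Sum>i\<in>J. norm (q i (int k) l))"
      by (rule sum_mono2[OF \<open>finite J\<close> active[OF k l(2)]]) auto
    also have "\<dots> \<le> (\<Sum>i\<in>J. C * (real k * (2 + R)) ^ D)"
    proof (rule sum_mono)
      fix i assume "i \<in> J"
      have "norm (q i (int k) l) \<le> C * (1 + \<bar>real_of_int (int k)\<bar> + norm l) ^ D"
        using C(2) \<open>i \<in> J\<close> l(1) by blast
      also have "\<dots> \<le> C * (real k * (2 + R)) ^ D"
        using k l(2) C(1) by (intro mult_left_mono power_mono) (auto simp: algebra_simps)
      finally show "norm (q i (int k) l) \<le> C * (real k * (2 + R)) ^ D" .
    qed
    also have "\<dots> = (real (card J) * C * (2 + R) ^ D) * real k ^ D"
      by (simp add: power_mult_distrib)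
    finally show ?thesis .
  qed
  moreover have "real (card J) * C * (2 + R) ^ D \<ge> 0"
    using C(1) assms(3) by simp
  ultimately show ?thesis
    using that by blast
qed

lemma class_S_sum_norm_cball_le:
  fixes \<Lambda> :: "'a::euclidean_space set"
  assumes "full_lattice \<Lambda>" "class_S \<Lambda> m" "R \<ge> 1"
  obtains C D where
    "\<And>k. k \<ge> 1 \<Longrightarrow> (\<Sum>l\<in>\<Lambda> \<inter> cball 0 (real k * R). norm (m (int k) l)) \<le> C * real k ^ D"
proof -
  obtain Cm Dm where Cm: "Cm \<ge> 0"
    "\<And>k l. k \<ge> 1 \<Longrightarrow> l \<in> \<Lambda> \<Longrightarrow> norm l \<le> real k * R \<Longrightarrow> norm (m (int k) l) \<le> Cm * real k ^ Dm"
    using class_S_polynomial_growth[OF assms(1,2), of R] assms(3) by auto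
  obtain Cc d where Cc: "\<And>r. r \<ge> 1 \<Longrightarrow> real (card (\<Lambda> \<inter> cball 0 r)) \<le> Cc * r ^ d"
    using full_lattice_card_cball_le[OF assms(1)] by blast
  have "(\<Sum>l\<in>\<Lambda> \<inter> cball 0 (real k * R). norm (m (int k) l)) \<le> (Cc * R ^ d * Cm) * real k ^ (d + Dm)"
    if k: "k \<ge> 1" for k
  proof -
    have "(\<Sum>l\<in>\<Lambda> \<inter> cball 0 (real k * R). norm (m (int k) l))
        \<le> real (card (\<Lambda> \<inter> cball 0 (real k * R))) * (Cm * real k ^ Dm)"
      using Cm(2)[OF k] by (intro sum_bounded_above) auto
    also have "\<dots> \<le> (Cc * (real k * R) ^ d) * (Cm * real k ^ Dm)"
    proof (intro mult_right_mono Cc)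
      show "1 \<le> real k * R"
        using mult_mono[of 1 "real k" 1 R] k assms(3) by simp
    qed (simp add: Cm(1))
    also have "\<dots> = (Cc * R ^ d * Cm) * real k ^ (d + Dm)"
      by (simp add: power_mult_distrib power_add)
    finally show ?thesis .
  qed
  then show ?thesis
    using that by blast
qed

section \<open>Test functions and finite differences\<close>

lemma test_function_vanishes_outside_ball:
  assumes "test_function g"
  obtains R where "R > 0" "\<And>x. norm x > R \<Longrightarrow> g x = 0"
proof -
  obtain K where K: "compact K" "\<And>x. x \<notin> K \<Longrightarrow> g x = 0"
    using assms unfolding test_function_def by auto
  obtain R where "R > 0" "\<And>x. x \<in> K \<Longrightarrow> norm x \<le> R"
    using compact_imp_bounded[OF K(1)] bounded_pos by metis
  then show ?thesis
    using that K(2) by force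
qed

lemma smooth_fun_differentiable: "smooth_fun f \<Longrightarrow> f differentiable (at x)"
  by (erule smooth_fun.cases) simp

lemma smooth_fun_frechet_derivative: "smooth_fun f \<Longrightarrow> smooth_fun (\<lambda>x. frechet_derivative f (at x) u)"
  by (erule smooth_fun.cases) simp

lemma test_function_differentiable: "test_function g \<Longrightarrow> g differentiable (at x)"
  unfolding test_function_def by (auto intro: smooth_fun_differentiable)

lemma test_function_bounded:
  assumes "test_function g"
  obtains C where "\<And>x. norm (g x) \<le> C"
proof -
  obtain K where K: "compact K" "\<And>x. x \<notin> K \<Longrightarrow> g x = 0"
    using assms unfolding test_function_def by auto
  have "continuous_on K g"
    by (intro continuous_at_imp_continuous_on ballI differentiable_imp_continuous_within
        test_function_differentiable[OF assms])
  then have "bounded (g ` K)"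
    using compact_continuous_image K(1) compact_imp_bounded by blast
  then obtain C where "\<And>x. x \<in> K \<Longrightarrow> norm (g x) \<le> C"
    unfolding bounded_iff by blast
  then have "norm (g x) \<le> max C 0" for x
    using K(2)[of x] by (cases "x \<in> K") (simp_all add: max.coboundedI1)
  then show ?thesis
    by (rule that)
qed

lemma test_function_frechet_derivative:
  assumes "test_function g"
  shows "test_function (\<lambda>x. frechet_derivative g (at x) u)"
proof -
  obtain K where K: "compact K" "\<And>x. x \<notin> K \<Longrightarrow> g x = 0"
    using assms unfolding test_function_def by auto
  have "frechet_derivative g (at x) u = 0" if "x \<notin> K" for x
  proof -
    have "open (- K)"
      using compact_imp_closed[OF K(1)] by auto
    then have "(g has_derivative (\<lambda>_. 0)) (at x)"
      by (rule has_derivative_transform_within_open[of "\<lambda>_. 0" "\<lambda>_. 0" _ _ "- K", rotated])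
        (use that K(2) in auto)
    then have "frechet_derivative g (at x) = (\<lambda>_. 0)"
      by (metis frechet_derivative_at)
    then show ?thesis
      by simp
  qed
  moreover have "smooth_fun (\<lambda>x. frechet_derivative g (at x) u)"
    using assms unfolding test_function_def by (auto intro: smooth_fun_frechet_derivative)
  ultimately show ?thesis
    unfolding test_function_def using K(1) by blast
qed

lemma has_vector_derivative_along_line:
  assumes "g differentiable (at (x + t *\<^sub>R u))"
  shows "((\<lambda>t. g (x + t *\<^sub>R u)) has_vector_derivative frechet_derivative g (at (x + t *\<^sub>R u)) u) (at t)"
proof -
  have "(g has_derivative frechet_derivative g (at (x + t *\<^sub>R u))) (at (x + t *\<^sub>R u))"
    using assms frechet_derivative_works by blast
  moreover have "((\<lambda>t. x + t *\<^sub>R u) has_derivative (\<lambda>t. t *\<^sub>R u)) (at t)"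
    by (auto intro!: derivative_eq_intros)
  ultimately have "((\<lambda>t. g (x + t *\<^sub>R u)) has_derivative
      (\<lambda>s. frechet_derivative g (at (x + t *\<^sub>R u)) (s *\<^sub>R u))) (at t)"
    using diff_chain_at by (fastforce simp: o_def)
  moreover have "linear (frechet_derivative g (at (x + t *\<^sub>R u)))"
    using \<open>(g has_derivative _) _\<close> has_derivative_linear by blast
  ultimately show ?thesis
    unfolding has_vector_derivative_def by (simp add: linear_scale)
qed

lemma has_vector_derivative_poly_shift:
  fixes g :: "'a::real_normed_vector \<Rightarrow> 'b::real_normed_field"
  assumes "\<And>y. g differentiable (at y)"
  shows "((\<lambda>t. poly_shift h p g (x + t *\<^sub>R u)) has_vector_derivative
           poly_shift h p (\<lambda>y. frechet_derivative g (at y) u) (x + t *\<^sub>R u)) (at t)"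
  unfolding poly_shift_def
proof (intro has_vector_derivative_sum has_vector_derivative_mult_right)
  fix i
  show "((\<lambda>t. g (x + t *\<^sub>R u + of_nat i *\<^sub>R h)) has_vector_derivative
      frechet_derivative g (at (x + t *\<^sub>R u + of_nat i *\<^sub>R h)) u) (at t)"
    using has_vector_derivative_along_line[where x = "x + of_nat i *\<^sub>R h", OF assms]
    by (simp add: algebra_simps)
qed

lemma test_function_finite_difference_bound:
  assumes "test_function g"
  shows "\<exists>C. \<forall>s>0. \<forall>x. norm (poly_shift (s *\<^sub>R u) ([:1, -1:] ^ M) g x) \<le> C * s ^ M"
  using assms
proof (induction M arbitrary: g)
  case 0
  then obtain C where "\<And>x. norm (g x) \<le> C"
    using test_function_bounded by blast
  then show ?case
    by auto
next
  case (Suc M)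
  let ?g' = "\<lambda>y. frechet_derivative g (at y) u"
  obtain C where C: "\<And>s x. s > 0 \<Longrightarrow> norm (poly_shift (s *\<^sub>R u) ([:1, -1:] ^ M) ?g' x) \<le> C * s ^ M"
    using Suc.IH[OF test_function_frechet_derivative[OF Suc.prems]] by blast
  have "norm (poly_shift (s *\<^sub>R u) ([:1, -1:] ^ Suc M) g x) \<le> C * s ^ Suc M" if s: "s > 0" for s x
  proof -
    define G where "G t = poly_shift (s *\<^sub>R u) ([:1, -1:] ^ M) g (x + t *\<^sub>R u)" for t
    have G': "(G has_vector_derivative poly_shift (s *\<^sub>R u) ([:1, -1:] ^ M) ?g' (x + t *\<^sub>R u)) (at t)" for t
      unfolding G_def using has_vector_derivative_poly_shift test_function_differentiable[OF Suc.prems]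
      by blast
    have "poly_shift (s *\<^sub>R u) ([:1, -1:] ^ Suc M) g x = G 0 - G s"
      unfolding G_def by (simp only: power_Suc poly_shift_mult poly_shift_linear) simp
    also have "norm (G 0 - G s) \<le> C * s ^ M * s - C * s ^ M * 0"
      unfolding norm_minus_commute[of "G 0"]
    proof (rule differentiable_bound_general[OF s, where \<phi> = "\<lambda>t. C * s ^ M * t" and \<phi>' = "\<lambda>_. C * s ^ M"])
      show "continuous_on {0..s} G"
        by (rule continuous_on_vector_derivative) (rule has_vector_derivative_at_within[OF G'])
      show "continuous_on {0..s} (\<lambda>t. C * s ^ M * t)"
        by (intro continuous_intros)
      show "(G has_vector_derivative poly_shift (s *\<^sub>R u) ([:1, -1:] ^ M) ?g' (x + t *\<^sub>R u)) (at t)" for t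
        by (rule G')
      show "((\<lambda>t. C * s ^ M * t) has_vector_derivative C * s ^ M) (at t)" for t
        by (auto intro!: derivative_eq_intros)
      show "norm (poly_shift (s *\<^sub>R u) ([:1, -1:] ^ M) ?g' (x + t *\<^sub>R u)) \<le> C * s ^ M" for t
        using C[OF s] by blast
    qed
    finally show ?thesis
      by (simp add: algebra_simps)
  qed
  then show ?case
    by blast
qed

section \<open>Adjointness and the pairing with \<open>\<Theta>\<close>\<close>

lemma summable_on_finite_support:
  "finite {x\<in>A. f x \<noteq> 0} \<Longrightarrow> f summable_on A"
  by (rule summable_on_cong_neutral[THEN iffD1, OF _ _ _ summable_on_finite]) auto

lemma infsum_eq_sum_superset_support:
  assumes "finite F" "F \<subseteq> A" "\<And>x. x \<in> A \<Longrightarrow> x \<notin> F \<Longrightarrow> f x = 0"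
  shows "(\<Sum>\<^sub>\<infinity>x\<in>A. f x) = (\<Sum>x\<in>F. f x)"
  using assms by (intro infsumI has_sum_finite_neutralI) auto

lemma finite_support_poly_shift:
  fixes \<Lambda> :: "'a::euclidean_space set"
  assumes "full_lattice \<Lambda>" "\<eta> \<in> \<Lambda>" "finite {l\<in>\<Lambda>. \<psi> l \<noteq> 0}"
  shows "finite {l\<in>\<Lambda>. poly_shift \<eta> p \<psi> l \<noteq> 0}"
proof -
  have "{l\<in>\<Lambda>. poly_shift \<eta> p \<psi> l \<noteq> 0}
      \<subseteq> (\<Union>i\<le>degree p. (\<lambda>y. y - of_nat i *\<^sub>R \<eta>) ` {l\<in>\<Lambda>. \<psi> l \<noteq> 0})"
  proof safe
    fix l assume "l \<in> \<Lambda>" "poly_shift \<eta> p \<psi> l \<noteq> 0"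
    then obtain i where "i \<le> degree p" "coeff p i * \<psi> (l + of_nat i *\<^sub>R \<eta>) \<noteq> 0"
      unfolding poly_shift_def by (auto elim: sum.not_neutral_contains_not_neutral)
    moreover have "l + of_nat i *\<^sub>R \<eta> \<in> \<Lambda>"
      using full_lattice_add_of_nat_scaleR[OF assms(1) \<open>l \<in> \<Lambda>\<close> assms(2)] .
    ultimately show "l \<in> (\<Union>i\<le>degree p. (\<lambda>y. y - of_nat i *\<^sub>R \<eta>) ` {l\<in>\<Lambda>. \<psi> l \<noteq> 0})"
      by (intro UN_I[of i] image_eqI[of _ _ "l + of_nat i *\<^sub>R \<eta>"]) auto
  qed
  then show ?thesis
    by (rule finite_subset) (use assms(3) in auto)
qed

lemma infsum_poly_shift_adjoint:
  fixes \<Lambda> :: "'a::euclidean_space set" and f \<psi> :: "'a \<Rightarrow> complex"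
  assumes lat: "full_lattice \<Lambda>" and \<eta>: "\<eta> \<in> \<Lambda>" and fin: "finite {l\<in>\<Lambda>. \<psi> l \<noteq> 0}"
  shows "(\<Sum>\<^sub>\<infinity>l\<in>\<Lambda>. poly_shift (-\<eta>) p f l * \<psi> l) = (\<Sum>\<^sub>\<infinity>l\<in>\<Lambda>. f l * poly_shift \<eta> p \<psi> l)"
  using fin
proof (induction p arbitrary: \<psi>)
  case (pCons a p)
  define \<psi>' where "\<psi>' l = \<psi> (l + \<eta>)" for l
  have bij: "bij_betw (\<lambda>l. l + \<eta>) \<Lambda> \<Lambda>"
    by (rule bij_betw_byWitness[where f' = "\<lambda>l. l - \<eta>"])
      (use full_lattice_add[OF lat _ \<eta>] full_lattice_diff[OF lat _ \<eta>] in auto)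
  have "{l\<in>\<Lambda>. \<psi>' l \<noteq> 0} \<subseteq> (\<lambda>l. l - \<eta>) ` {l\<in>\<Lambda>. \<psi> l \<noteq> 0}"
    unfolding \<psi>'_def using full_lattice_add[OF lat _ \<eta>] by (auto intro!: image_eqI[of _ _ "_ + \<eta>"])
  then have fin': "finite {l\<in>\<Lambda>. \<psi>' l \<noteq> 0}"
    using pCons.prems finite_subset by blast
  have shift: "poly_shift \<eta> p \<psi>' l = poly_shift \<eta> p \<psi> (l + \<eta>)" for l
    by (simp add: poly_shift_def \<psi>'_def algebra_simps)
  have summable: "(\<lambda>l. a * (f l * \<psi> l)) summable_on \<Lambda>"
    "(\<lambda>l. poly_shift (-\<eta>) p f (l - \<eta>) * \<psi> l) summable_on \<Lambda>"
    using pCons.prems by (auto intro!: summable_on_finite_support elim!: rev_finite_subset)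
  have summable': "(\<lambda>l. f l * poly_shift \<eta> p \<psi>' l) summable_on \<Lambda>"
    using finite_support_poly_shift[OF lat \<eta> fin', of p]
    by (auto intro!: summable_on_finite_support elim!: rev_finite_subset)
  have "(\<Sum>\<^sub>\<infinity>l\<in>\<Lambda>. poly_shift (-\<eta>) (pCons a p) f l * \<psi> l)
      = (\<Sum>\<^sub>\<infinity>l\<in>\<Lambda>. a * (f l * \<psi> l) + poly_shift (-\<eta>) p f (l - \<eta>) * \<psi> l)"
    by (simp add: poly_shift_pCons algebra_simps)
  also have "\<dots> = (\<Sum>\<^sub>\<infinity>l\<in>\<Lambda>. a * (f l * \<psi> l)) + (\<Sum>\<^sub>\<infinity>l\<in>\<Lambda>. poly_shift (-\<eta>) p f (l - \<eta>) * \<psi> l)"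
    by (rule infsum_add[OF summable(1,2)])
  also have "(\<Sum>\<^sub>\<infinity>l\<in>\<Lambda>. poly_shift (-\<eta>) p f (l - \<eta>) * \<psi> l) = (\<Sum>\<^sub>\<infinity>l\<in>\<Lambda>. poly_shift (-\<eta>) p f l * \<psi>' l)"
    using infsum_reindex_bij_betw[OF bij, of "\<lambda>l. poly_shift (-\<eta>) p f (l - \<eta>) * \<psi> l"]
    by (simp add: \<psi>'_def)
  also have "\<dots> = (\<Sum>\<^sub>\<infinity>l\<in>\<Lambda>. f l * poly_shift \<eta> p \<psi>' l)"
    by (rule pCons.IH[OF fin'])
  also have "(\<Sum>\<^sub>\<infinity>l\<in>\<Lambda>. a * (f l * \<psi> l)) + (\<Sum>\<^sub>\<infinity>l\<in>\<Lambda>. f l * poly_shift \<eta> p \<psi>' l)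
      = (\<Sum>\<^sub>\<infinity>l\<in>\<Lambda>. a * (f l * \<psi> l) + f l * poly_shift \<eta> p \<psi>' l)"
    by (rule infsum_add[OF summable(1) summable', symmetric])
  also have "\<dots> = (\<Sum>\<^sub>\<infinity>l\<in>\<Lambda>. f l * poly_shift \<eta> (pCons a p) \<psi> l)"
    by (simp add: poly_shift_pCons shift algebra_simps)
  finally show ?case .
qed simp

lemma infsum_mult_eq_of_annihilated:
  fixes \<Lambda> :: "'a::euclidean_space set" and f \<psi> :: "'a \<Rightarrow> complex"
  assumes lat: "full_lattice \<Lambda>" and \<eta>: "\<eta> \<in> \<Lambda>" and fin: "finite {l\<in>\<Lambda>. \<psi> l \<noteq> 0}"
    and annihilated: "\<And>l. l \<in> \<Lambda> \<Longrightarrow> poly_shift (-\<eta>) U f l = 0"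
    and bezout: "A * U + Q = 1"
  shows "(\<Sum>\<^sub>\<infinity>l\<in>\<Lambda>. f l * \<psi> l) = (\<Sum>\<^sub>\<infinity>l\<in>\<Lambda>. f l * poly_shift \<eta> Q \<psi> l)"
proof -
  have "U * A + Q = 1"
    using bezout by (simp add: mult.commute)
  then have split: "\<psi> l = poly_shift \<eta> U (poly_shift \<eta> A \<psi>) l + poly_shift \<eta> Q \<psi> l" for l
    using poly_shift_add[of \<eta> "U * A" Q \<psi> l] by (simp add: poly_shift_mult)
  have fin_A: "finite {l\<in>\<Lambda>. poly_shift \<eta> A \<psi> l \<noteq> 0}"
    by (rule finite_support_poly_shift[OF lat \<eta> fin])
  have summable_U: "(\<lambda>l. f l * poly_shift \<eta> U (poly_shift \<eta> A \<psi>) l) summable_on \<Lambda>"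
    using finite_support_poly_shift[OF lat \<eta> fin_A, of U]
    by (auto intro!: summable_on_finite_support elim!: rev_finite_subset)
  have summable_Q: "(\<lambda>l. f l * poly_shift \<eta> Q \<psi> l) summable_on \<Lambda>"
    using finite_support_poly_shift[OF lat \<eta> fin, of Q]
    by (auto intro!: summable_on_finite_support elim!: rev_finite_subset)
  have "(\<Sum>\<^sub>\<infinity>l\<in>\<Lambda>. f l * poly_shift \<eta> U (poly_shift \<eta> A \<psi>) l)
      = (\<Sum>\<^sub>\<infinity>l\<in>\<Lambda>. poly_shift (-\<eta>) U f l * poly_shift \<eta> A \<psi> l)"
    by (rule infsum_poly_shift_adjoint[OF lat \<eta> fin_A, symmetric])
  also have "\<dots> = 0"
    by (rule infsum_0) (simp add: annihilated)
  finally show ?thesis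
    using infsum_add[OF summable_U summable_Q] by (simp add: split distrib_left)
qed

lemma Theta_pair_eq_infsum:
  assumes "finite {l\<in>\<Lambda>. \<phi> ((1 / real k) *\<^sub>R l) \<noteq> 0}"
  shows "Theta_pair \<Lambda> m \<phi> k = (\<Sum>\<^sub>\<infinity>l\<in>\<Lambda>. m (int k) l * \<phi> ((1 / real k) *\<^sub>R l))"
  unfolding Theta_pair_def using assms by (intro infsum_eq_sum_superset_support[symmetric]) auto

lemma norm_Theta_pair_le_remainder:
  fixes \<Lambda> :: "'a::euclidean_space set" and \<phi> :: "'a \<Rightarrow> complex" and k :: nat
  defines "\<psi> \<equiv> \<lambda>l. \<phi> ((1 / real k) *\<^sub>R l)"
  assumes lat: "full_lattice \<Lambda>" and \<eta>: "\<eta> \<in> \<Lambda>" and "k \<ge> 1"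
    and \<phi>: "\<And>x. norm x > \<rho> \<Longrightarrow> \<phi> x = 0"
    and annihilated: "\<And>l. l \<in> \<Lambda> \<Longrightarrow> poly_shift (-\<eta>) U (m (int k)) l = 0"
    and bezout: "A * U + Q = 1"
    and outside: "\<And>l. norm l > r \<Longrightarrow> poly_shift \<eta> Q \<psi> l = 0"
    and bound: "\<And>l. norm (poly_shift \<eta> Q \<psi> l) \<le> c"
  shows "norm (Theta_pair \<Lambda> m \<phi> k) \<le> (\<Sum>l\<in>\<Lambda> \<inter> cball 0 r. norm (m (int k) l)) * c"
proof -
  have "{l\<in>\<Lambda>. \<psi> l \<noteq> 0} \<subseteq> \<Lambda> \<inter> cball 0 (real k * \<rho>)"
    using \<phi> \<open>k \<ge> 1\<close> by (force simp: \<psi>_def field_simps)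
  then have fin: "finite {l\<in>\<Lambda>. \<psi> l \<noteq> 0}"
    using finite_full_lattice_inter_cball[OF lat] finite_subset by blast
  have "Theta_pair \<Lambda> m \<phi> k = (\<Sum>\<^sub>\<infinity>l\<in>\<Lambda>. m (int k) l * \<psi> l)"
    unfolding \<psi>_def by (rule Theta_pair_eq_infsum) (use fin in \<open>simp add: \<psi>_def\<close>)
  also have "\<dots> = (\<Sum>\<^sub>\<infinity>l\<in>\<Lambda>. m (int k) l * poly_shift \<eta> Q \<psi> l)"
    by (rule infsum_mult_eq_of_annihilated[OF lat \<eta> fin annihilated bezout])
  also have "\<dots> = (\<Sum>l\<in>\<Lambda> \<inter> cball 0 r. m (int k) l * poly_shift \<eta> Q \<psi> l)"
    using outside by (intro infsum_eq_sum_superset_support finite_full_lattice_inter_cball[OF lat]) auto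
  finally have "norm (Theta_pair \<Lambda> m \<phi> k) \<le> (\<Sum>l\<in>\<Lambda> \<inter> cball 0 r. norm (m (int k) l) * c)"
    using bound by (auto intro!: order.trans[OF norm_sum] sum_mono simp: norm_mult mult_left_mono)
  then show ?thesis
    by (simp add: sum_distrib_right)
qed

lemma Theta_pair_rapid_decay:
  fixes \<Lambda> :: "'a::euclidean_space set"
  assumes lat: "full_lattice \<Lambda>" and m: "class_S \<Lambda> m" and \<eta>: "\<eta> \<in> \<Lambda>"
    and \<zeta>: "\<zeta> \<noteq> 0" "\<zeta> \<noteq> 1" and ker: "\<forall>k. \<forall>l\<in>\<Lambda>. (nabla \<zeta> \<eta> ^^ N) m k l = 0"
    and \<phi>: "test_function \<phi>"
  shows "\<exists>C. \<forall>\<^sub>F k in sequentially. norm (Theta_pair \<Lambda> m \<phi> k) \<le> C / real k ^ e"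
proof -
  obtain R0 where R0: "R0 > 0" "\<And>x. norm x > R0 \<Longrightarrow> \<phi> x = 0"
    using test_function_vanishes_outside_ball[OF \<phi>] by blast
  define R where "R = R0 + real (N + 1) * norm \<eta> + 1"
  obtain Cm D where Cm: "\<And>k. k \<ge> 1 \<Longrightarrow> (\<Sum>l\<in>\<Lambda> \<inter> cball 0 (real k * R). norm (m (int k) l)) \<le> Cm * real k ^ D"
    using class_S_sum_norm_cball_le[OF lat m, of R] R0(1) unfolding R_def by auto
  define M where "M = D + e"
  \<comment> \<open>\<open>R\<close> is fixed before \<open>M\<close> (the exponent \<open>D\<close> depends on \<open>R\<close>), so the support radius of the
    remainder must stay below \<open>k R\<close> for every \<open>M\<close>: this is why \<open>degree B \<le> N\<close> is needed.\<close>
  obtain A B where AB: "A * [:1, -\<zeta>:] ^ N + B * [:1, -1:] ^ M = 1" "degree B \<le> N"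
    using poly_bezout_shift_factors[OF \<zeta>(2,1)] by blast
  obtain C\<phi> where C\<phi>: "\<And>s x. s > 0 \<Longrightarrow> norm (poly_shift (s *\<^sub>R \<eta>) ([:1, -1:] ^ M) \<phi> x) \<le> C\<phi> * s ^ M"
    using test_function_finite_difference_bound[OF \<phi>] by blast
  have "C\<phi> \<ge> 0"
    using order.trans[OF norm_ge_zero C\<phi>[of 1 0]] by simp
  define CB where "CB = (\<Sum>i\<le>degree B. norm (coeff B i))"
  have "norm (Theta_pair \<Lambda> m \<phi> k) \<le> (Cm * CB * C\<phi>) / real k ^ e" if k: "k \<ge> max 1 M" for k
  proof -
    let ?Q = "B * [:1, -1:] ^ M"
    have "k \<ge> 1" "M \<le> k"
      using k by auto
    have "degree ?Q \<le> N + M"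
      using degree_mult_le[of B "[:1, -1:] ^ M"] degree_power_le[of "[:1, -1:]" M] AB(2) by simp
    also have "\<dots> \<le> k * (N + 1)"
    proof -
      have "N * 1 \<le> N * k"
        using \<open>k \<ge> 1\<close> by (rule mult_le_mono2)
      then show ?thesis
        using \<open>M \<le> k\<close> by (simp only: algebra_simps mult_1_right)
    qed
    finally have deg: "degree ?Q \<le> k * (N + 1)" .
    have radius: "real k * (R0 + real (N + 1) * norm \<eta>) < real k * R"
      using \<open>k \<ge> 1\<close> unfolding R_def by (simp add: algebra_simps)
    have outside: "poly_shift \<eta> ?Q (\<lambda>y. \<phi> ((1 / real k) *\<^sub>R y)) l = 0"
      if l: "norm l > real k * R" for l
      by (rule poly_shift_rescaled_eq_0_outside_ball[OF R0(2) \<open>k \<ge> 1\<close> deg order.strict_trans[OF radius l]])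
    have "norm (poly_shift \<eta> ?Q (\<lambda>y. \<phi> ((1 / real k) *\<^sub>R y)) l) \<le> CB * (C\<phi> * (1 / real k) ^ M)" for l
      unfolding CB_def using C\<phi> \<open>k \<ge> 1\<close> by (intro norm_poly_shift_mult_rescale_le) simp
    with norm_Theta_pair_le_remainder[OF lat \<eta> \<open>k \<ge> 1\<close> R0(2) _ AB(1) outside]
    have "norm (Theta_pair \<Lambda> m \<phi> k)
        \<le> (\<Sum>l\<in>\<Lambda> \<inter> cball 0 (real k * R). norm (m (int k) l)) * (CB * (C\<phi> * (1 / real k) ^ M))"
      using ker by (simp add: nabla_power_eq_poly_shift)
    also have "\<dots> \<le> Cm * real k ^ D * (CB * (C\<phi> * (1 / real k) ^ M))"
      using Cm \<open>k \<ge> 1\<close> \<open>C\<phi> \<ge> 0\<close> by (intro mult_right_mono) (auto simp: CB_def intro!: mult_nonneg_nonneg sum_nonneg)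
    also have "\<dots> = (Cm * CB * C\<phi>) / real k ^ e"
      using \<open>k \<ge> 1\<close> unfolding M_def by (simp add: field_simps power_add)
    finally show ?thesis .
  qed
  then show ?thesis
    by (intro exI eventually_sequentiallyI)
qed

lemma asymp_zero_if_rapid_decay:
  assumes "\<And>\<phi> e. test_function \<phi> \<Longrightarrow> \<exists>C. \<forall>\<^sub>F k in sequentially. norm (Theta_pair \<Lambda> m \<phi> k) \<le> C / real k ^ e"
  shows "asymp_zero \<Lambda> m"
  unfolding asymp_zero_def
proof (intro allI impI)
  fix \<phi> :: "'a \<Rightarrow> complex" and e :: nat
  assume "test_function \<phi>"
  then obtain C where C: "\<forall>\<^sub>F k in sequentially. norm (Theta_pair \<Lambda> m \<phi> k) \<le> C / real k ^ Suc e"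
    using assms by blast
  have "\<forall>\<^sub>F k in sequentially. norm (of_nat k ^ e * Theta_pair \<Lambda> m \<phi> k) \<le> C / real k"
    using C eventually_gt_at_top[of 0]
  proof eventually_elim
    case (elim k)
    have "norm (of_nat k ^ e * Theta_pair \<Lambda> m \<phi> k) = real k ^ e * norm (Theta_pair \<Lambda> m \<phi> k)"
      by (simp add: norm_mult norm_power)
    also have "\<dots> \<le> real k ^ e * (C / real k ^ Suc e)"
      using elim(1) by (rule mult_left_mono) simp
    also have "\<dots> = C / real k"
      using elim(2) by (simp add: field_simps)
    finally show ?case .
  qed
  then show "((\<lambda>k. of_nat k ^ e * Theta_pair \<Lambda> m \<phi> k) \<longlongrightarrow> 0) sequentially"
    by (rule Lim_null_comparison) (rule lim_const_over_n)
qed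

theorem proposition4p1:
  fixes \<Lambda> :: "'a::euclidean_space set"
    and m :: "int \<Rightarrow> 'a \<Rightarrow> complex"
    and \<eta> :: 'a and \<zeta> :: complex and N :: nat
  assumes "full_lattice \<Lambda>"
    and "class_S \<Lambda> m"
    and "\<eta> \<in> \<Lambda>" and "\<eta> \<noteq> 0"
    and "\<exists>n::nat. n > 0 \<and> \<zeta> ^ n = 1" and "\<zeta> \<noteq> 1"
    and "\<forall>k. \<forall>l\<in>\<Lambda>. (nabla \<zeta> \<eta> ^^ N) m k l = 0"
  shows "asymp_zero \<Lambda> m"
proof -
  obtain n :: nat where "n > 0" "\<zeta> ^ n = 1"
    using assms(5) by blast
  then have "\<zeta> \<noteq> 0"
    by (auto simp: power_0_left)
  show ?thesis
    by (rule asymp_zero_if_rapid_decay)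
      (rule Theta_pair_rapid_decay[OF assms(1-3) \<open>\<zeta> \<noteq> 0\<close> assms(6,7)])
qed

end
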